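(* Let $p$ be a prime, $V\in\mathbb{F}_p((X^{-1}))$ arbitrary, and $L\in\mathbb{F}_p((X^{-1}))$ irrational with continued fraction $[A_0;A_1,A_2,\ldots]$ and $d_h=\deg Q_h$. Let $m\in\mathbb{N}$ and $H\in\mathbb{N}$ with $d_H\le m<d_{H+1}$. Consider the point set of $p^m$ points in $[0,1)$ obtained from $\{k(X)L(X)+V(X)\}$ evaluated at $X=p$, where $k$ ranges over all polynomials in $\mathbb{F}_p[X]$ of degree $<m$. Then its star discrepancy satisfies $p^mD^*_{p^m}\le p^{\deg(A_{H+1}(L))}$.
   Context: Elements of $\mathbb{F}_p$ are identified with $\{0,\ldots,p-1\}$. For $M=\sum_{i=w}^\infty a_iX^{-i}$, $\{M\}=\sum_{i\ge\max(1,w)}a_iX^{-i}$, and if $\{M\}=\sum_{i\ge1}c_iX^{-i}$, its evaluation at $X=p$ is the real number $\sum_{i\ge1}c_ip^{-i}$. Irrational $L$ has unique continued fraction $[A_0;A_1,\ldots]$, $A_i\in\mathbb{F}_p[X]$, $\deg A_i\ge1$ for $i\ge1$; $A_{h}(L)=A_h$; convergents $P_h/Q_h=[A_0;\ldots,A_h]$ in lowest terms, $d_h=\deg Q_h=\sum_{i=1}^h\deg A_i$. For a point set $z_0,\ldots,z_{M-1}$ in $[0,1)$, $D_M^*=\sup_{0<\gamma\le1}|\#\{i:z_i<\gamma\}/M-\gamma|$. *)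

theory Defs
  imports Complex_Main "HOL-Computational_Algebra.Formal_Laurent_Series"
    "Berlekamp_Zassenhaus.Finite_Field"
begin

(* F_p((X^{-1})) is modelled as Laurent series 'p mod_ring fls in the variable Y = X^{-1}
   (with CARD('p) = p prime).  Thus  fls_nth M i  is the coefficient of X^{-i}. *)
type_synonym 'p lser = "'p mod_ring fls"

(* {M}: keep the coefficients of X^{-i}, i >= 1 *)
definition frac_part :: "'p::prime_card lser \<Rightarrow> 'p lser" where
  "frac_part M = fps_to_fls (fls_regpart M) - fls_const (fls_nth M 0)"

definition poly_part :: "'p::prime_card lser \<Rightarrow> 'p lser" where
  "poly_part M = M - frac_part M"

(* embedding of F_p[X] into F_p((X^{-1})): X^j = Y^{-j} *)
definition poly_lser :: "'p::prime_card mod_ring poly \<Rightarrow> 'p lser" where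
  "poly_lser k = (\<Sum>j\<le>Polynomial.degree k. fls_const (Polynomial.coeff k j) * fls_X_intpow (- int j))"

(* degree in X *)
definition ldeg :: "'p::prime_card lser \<Rightarrow> int" where
  "ldeg M = - fls_subdegree M"

definition irrational_lser :: "'p::prime_card lser \<Rightarrow> bool" where
  "irrational_lser L \<longleftrightarrow> \<not> (\<exists>P Q. Q \<noteq> 0 \<and> poly_lser Q * L = poly_lser P)"

fun cquot :: "'p::prime_card lser \<Rightarrow> nat \<Rightarrow> 'p lser" where
  "cquot L 0 = L"
| "cquot L (Suc n) = inverse (frac_part (cquot L n))"

definition pquot :: "'p::prime_card lser \<Rightarrow> nat \<Rightarrow> 'p lser" where
  "pquot L h = poly_part (cquot L h)"

(* d_h = deg Q_h = sum_{i=1}^h deg A_i *)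
definition cf_d :: "'p::prime_card lser \<Rightarrow> nat \<Rightarrow> int" where
  "cf_d L h = (\<Sum>i\<in>{1..h}. ldeg (pquot L i))"

definition eval_at_p :: "'p::prime_card lser \<Rightarrow> real" where
  "eval_at_p M = (\<Sum>i. real_of_int (to_int_mod_ring (fls_nth (frac_part M) (int (Suc i))))
                        / real CARD('p) ^ Suc i)"

definition star_disc :: "'i set \<Rightarrow> ('i \<Rightarrow> real) \<Rightarrow> real" where
  "star_disc I z = Sup {\<bar>real (card {i\<in>I. z i < \<gamma>}) / real (card I) - \<gamma>\<bar> | \<gamma>. 0 < \<gamma> \<and> \<gamma> \<le> 1}"

end

theory Submission
  imports Defs
begin

text \<open>
  Let \<open>r = d\<^sub>H\<close>. The best-approximation property of the convergent denominators says that
  for a nonzero polynomial \<open>k\<close> of degree \<open>< r\<close> the fractional part \<open>{kL}\<close> has a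
  nonzero digit among its first \<open>r\<close>. Hence the first \<open>r\<close> digits of \<open>{kL + V}\<close>
  separate the points of every coset \<open>k + \<bbbF>\<^sub>p[X]\<^sub><\<^sub>r\<close>, so on the \<open>p\<^sup>m\<close> polynomials
  of degree \<open>< m\<close> they take every value equally often: each \<open>p\<close>-adic interval of length
  \<open>p\<^sup>-\<^sup>r\<close> contains exactly \<open>p\<^sup>m\<^sup>-\<^sup>r\<close> points. This gives \<open>p\<^sup>m D\<^sup>* \<le> p\<^sup>m\<^sup>-\<^sup>r\<close>, and
  \<open>m - r < d\<^sub>H\<^sub>+\<^sub>1 - d\<^sub>H = deg A\<^sub>H\<^sub>+\<^sub>1\<close>.
\<close>

unbundle fps_syntax

section \<open>Fractional parts and continued fractions\<close>

definition is_poly_lser :: "'p::prime_card lser \<Rightarrow> bool" where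
  "is_poly_lser M \<longleftrightarrow> (\<forall>n\<ge>1. M $$ n = 0)"

lemma fls_nth_frac_part: "frac_part M $$ n = (if 1 \<le> n then M $$ n else 0)"
  by (auto simp: frac_part_def)

lemma fls_nth_poly_part: "poly_part M $$ n = (if n \<le> 0 then M $$ n else 0)"
  by (auto simp: poly_part_def fls_nth_frac_part)

lemma frac_part_add: "frac_part (A + B) = frac_part A + frac_part B"
  by (rule fls_eqI) (simp add: fls_nth_frac_part)

lemma frac_part_zero [simp]: "frac_part (0 :: 'p::prime_card lser) = 0"
  by (rule fls_eqI) (simp add: fls_nth_frac_part)

lemma frac_part_eq_0_iff: "frac_part M = 0 \<longleftrightarrow> is_poly_lser M"
  unfolding is_poly_lser_def by (auto simp: fls_eq_iff fls_nth_frac_part)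

lemma frac_part_eq_self: "(\<And>n. n \<le> 0 \<Longrightarrow> M $$ n = 0) \<Longrightarrow> frac_part M = M"
  by (rule fls_eqI) (auto simp: fls_nth_frac_part)

lemma fls_subdegree_frac_part_ge_1: "frac_part M \<noteq> 0 \<Longrightarrow> 1 \<le> fls_subdegree (frac_part M)"
  by (rule fls_subdegree_geI) (auto simp: fls_nth_frac_part)

lemma fls_subdegree_le_frac_part:
  "frac_part M \<noteq> 0 \<Longrightarrow> fls_subdegree M \<le> fls_subdegree (frac_part M)"
  by (rule fls_subdegree_geI) (auto simp: fls_nth_frac_part)

lemma is_poly_lser_poly_part: "is_poly_lser (poly_part M)"
  by (simp add: is_poly_lser_def fls_nth_poly_part)

lemma is_poly_lser_mult:
  assumes "is_poly_lser A" "is_poly_lser B"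
  shows "is_poly_lser (A * B)"
  unfolding is_poly_lser_def
proof (intro allI impI)
  fix n :: int
  assume "n \<ge> 1"
  then have "A $$ i * B $$ (n - i) = 0" for i
    using assms by (cases "i \<ge> 1") (auto simp: is_poly_lser_def)
  then show "(A * B) $$ n = 0"
    unfolding fls_times_nth(2) by (intro sum.neutral) auto
qed

lemma is_poly_lser_subdegree_le_0: "is_poly_lser K \<Longrightarrow> K \<noteq> 0 \<Longrightarrow> fls_subdegree K \<le> 0"
  unfolding is_poly_lser_def by (metis nth_fls_subdegree_nonzero not_le zless_imp_add1_zle add.left_neutral)

lemma fls_nth_poly_lser: "poly_lser k $$ n = (if n \<le> 0 then Polynomial.coeff k (nat (-n)) else 0)"
proof -
  have "poly_lser k $$ n = (\<Sum>j\<le>Polynomial.degree k. if n = - int j then Polynomial.coeff k j else 0)"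
    unfolding poly_lser_def fls_nth_sum
    by (intro sum.cong refl) (auto simp: fls_mult_const_nth)
  also have "\<dots> = (if n \<le> 0 then Polynomial.coeff k (nat (-n)) else 0)"
  proof (cases "n \<le> 0 \<and> nat (-n) \<le> Polynomial.degree k")
    case True
    then have "(\<Sum>j\<le>Polynomial.degree k. if n = - int j then Polynomial.coeff k j else 0)
       = (\<Sum>j\<le>Polynomial.degree k. if j = nat (-n) then Polynomial.coeff k j else 0)"
      by (intro sum.cong refl) auto
    then show ?thesis using True by simp
  next
    case False
    then show ?thesis by (auto intro!: sum.neutral simp: coeff_eq_0)
  qed
  finally show ?thesis .
qed

lemma is_poly_lser_poly_lser: "is_poly_lser (poly_lser k)"
  by (simp add: is_poly_lser_def fls_nth_poly_lser)

lemma fls_subdegree_poly_lser: "k \<noteq> 0 \<Longrightarrow> fls_subdegree (poly_lser k) = - int (Polynomial.degree k)"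
  by (rule fls_subdegree_eqI) (auto simp: fls_nth_poly_lser coeff_eq_0)

lemma poly_lser_nonzero: "k \<noteq> 0 \<Longrightarrow> poly_lser k \<noteq> 0"
  by (rule fls_nonzeroI[of _ "- int (Polynomial.degree k)"]) (simp add: fls_nth_poly_lser)

lemma poly_lser_diff: "poly_lser (a - b) = poly_lser a - poly_lser b"
  by (rule fls_eqI) (simp add: fls_nth_poly_lser)

lemma ldeg_poly_part_nonneg: "0 \<le> ldeg (poly_part M)"
proof (cases "poly_part M = 0")
  case False
  then have "poly_part M $$ fls_subdegree (poly_part M) \<noteq> 0" by simp
  then have "fls_subdegree (poly_part M) \<le> 0" by (auto simp: fls_nth_poly_part split: if_splits)
  then show ?thesis by (simp add: ldeg_def)
qed (simp add: ldeg_def)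

lemma cquot_Suc_shift: "cquot (cquot L 1) i = cquot L (Suc i)"
  by (induction i) auto

lemma cf_d_nonneg: "0 \<le> cf_d L H"
  unfolding cf_d_def pquot_def by (rule sum_nonneg) (rule ldeg_poly_part_nonneg)

lemma cf_d_Suc_shift: "cf_d L (Suc H) = ldeg (pquot L 1) + cf_d (cquot L 1) H"
proof -
  have "{1..Suc H} = insert 1 (Suc ` {1..H})" by auto
  then have "cf_d L (Suc H) = ldeg (pquot L 1) + (\<Sum>i\<in>Suc ` {1..H}. ldeg (pquot L i))"
    unfolding cf_d_def by simp
  also have "(\<Sum>i\<in>Suc ` {1..H}. ldeg (pquot L i)) = (\<Sum>i\<in>{1..H}. ldeg (pquot L (Suc i)))"
    by (subst sum.reindex) auto
  finally show ?thesis
    by (simp only: cf_d_def pquot_def cquot_Suc_shift)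
qed

lemma ldeg_pquot_1:
  assumes "frac_part L \<noteq> 0"
  shows "ldeg (pquot L 1) = fls_subdegree (frac_part L)"
proof -
  let ?t = "frac_part L"
  have s: "fls_subdegree (inverse ?t) = - fls_subdegree ?t" by simp
  have "1 \<le> fls_subdegree ?t" using fls_subdegree_frac_part_ge_1[OF assms] .
  moreover have "inverse ?t $$ (- fls_subdegree ?t) \<noteq> 0"
    using assms by (metis nth_fls_subdegree_nonzero inverse_nonzero_iff_nonzero s)
  ultimately have "fls_subdegree (poly_part (inverse ?t)) = - fls_subdegree ?t"
    by (intro fls_subdegree_eqI) (auto simp: fls_nth_poly_part)
  then show ?thesis by (simp add: pquot_def ldeg_def)
qed

lemma frac_part_cquot_nonzero:
  assumes "pquot L (Suc H) \<noteq> 0" "i \<le> H"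
  shows "frac_part (cquot L i) \<noteq> 0"
proof
  assume "frac_part (cquot L i) = 0"
  then have "cquot L (Suc i + n) = 0" for n
    by (induction n) auto
  from this[of "H - i"] have "pquot L (Suc H) = 0"
    using assms(2) by (simp add: pquot_def poly_part_def)
  with assms(1) show False ..
qed

lemma frac_part_poly_mult:
  assumes "is_poly_lser K"
  shows "frac_part (K * L) = frac_part (K * frac_part L)"
proof -
  have "L = poly_part L + frac_part L" by (simp add: poly_part_def)
  then have "frac_part (K * L) = frac_part (K * poly_part L) + frac_part (K * frac_part L)"
    by (metis distrib_left frac_part_add)
  moreover have "frac_part (K * poly_part L) = 0"
    using assms is_poly_lser_mult is_poly_lser_poly_part frac_part_eq_0_iff by blast
  ultimately show ?thesis by simp
qed

text \<open>Splitting \<open>K t = J + u\<close> into polynomial and fractional part, \<open>K = (J + u) / t\<close> forces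
  \<open>{J / t} = -{u / t}\<close>; with \<open>t = {L}\<close> this passes from \<open>L\<close> to the next complete quotient.\<close>

lemma frac_part_mult_via_inverse:
  assumes K: "is_poly_lser K" and t: "t \<noteq> 0"
    and J_frac: "frac_part (poly_part (K * t) * inverse t) \<noteq> 0"
  shows "frac_part (K * t) \<noteq> 0 \<and>
    fls_subdegree (frac_part (K * t)) \<le> fls_subdegree t + fls_subdegree (frac_part (poly_part (K * t) * inverse t))"
proof -
  define u where "u = frac_part (K * t)"
  define J where "J = poly_part (K * t)"
  have "K = (J + u) * inverse t"
    using t by (simp add: J_def u_def poly_part_def)
  then have "frac_part K = frac_part (J * inverse t) + frac_part (u * inverse t)"
    by (metis distrib_right frac_part_add)
  moreover have "frac_part K = 0" using K frac_part_eq_0_iff by blast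
  ultimately have fu: "frac_part (u * inverse t) = - frac_part (J * inverse t)"
    by (simp add: add_eq_0_iff)
  with J_frac have fnz: "frac_part (u * inverse t) \<noteq> 0" by (simp add: J_def)
  then have "u \<noteq> 0" by auto
  then have "fls_subdegree (u * inverse t) = fls_subdegree u - fls_subdegree t"
    using t by simp
  moreover have "fls_subdegree (u * inverse t) \<le> fls_subdegree (frac_part (u * inverse t))"
    by (rule fls_subdegree_le_frac_part[OF fnz])
  ultimately show ?thesis
    using fu \<open>u \<noteq> 0\<close> by (simp add: u_def J_def)
qed

text \<open>Since \<open>fls_subdegree\<close> is minus the degree in \<open>X\<close>, this says: for \<open>0 \<noteq> K \<in> \<bbbF>\<^sub>p[X]\<close>
  with \<open>deg K < d\<^sub>H\<close>, \<open>{KL}\<close> is nonzero of degree \<open>\<ge> -d\<^sub>H\<close>.\<close>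

lemma frac_part_mult_cf_bound:
  assumes "\<forall>i<H. frac_part (cquot L i) \<noteq> 0" "is_poly_lser K" "K \<noteq> 0"
    "- fls_subdegree K < cf_d L H"
  shows "frac_part (K * L) \<noteq> 0 \<and> fls_subdegree (frac_part (K * L)) \<le> cf_d L H"
  using assms
proof (induction H arbitrary: L K)
  case 0
  then show ?case using is_poly_lser_subdegree_le_0[of K] by (simp add: cf_d_def)
next
  case (Suc H)
  define t where "t = frac_part L"
  have t: "t \<noteq> 0" using Suc.prems(1) t_def by force
  have dSuc: "cf_d L (Suc H) = fls_subdegree t + cf_d (inverse t) H"
    using cf_d_Suc_shift[of L H] ldeg_pquot_1[of L] t by (simp add: t_def)
  have fKL: "frac_part (K * L) = frac_part (K * t)"
    using frac_part_poly_mult[OF Suc.prems(2)] by (simp add: t_def)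
  have Kt: "K * t \<noteq> 0" "fls_subdegree (K * t) = fls_subdegree K + fls_subdegree t"
    using t Suc.prems(3) by simp_all
  show ?case
  proof (cases "1 \<le> fls_subdegree K + fls_subdegree t")
    case True
    then have "frac_part (K * t) = K * t"
      using Kt by (intro frac_part_eq_self) auto
    then show ?thesis
      using fKL Kt True dSuc cf_d_nonneg[of "inverse t" H]
        is_poly_lser_subdegree_le_0[OF Suc.prems(2,3)] by simp
  next
    case False
    define J where "J = poly_part (K * t)"
    have Jn: "J $$ (fls_subdegree K + fls_subdegree t) \<noteq> 0"
      using False Kt by (simp add: J_def fls_nth_poly_part)
    then have "J \<noteq> 0" by auto
    have sdJ: "fls_subdegree J = fls_subdegree K + fls_subdegree t"
      by (rule fls_subdegree_eqI[OF Jn]) (use Kt in \<open>simp add: J_def fls_nth_poly_part\<close>)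
    have "\<forall>i<H. frac_part (cquot (inverse t) i) \<noteq> 0"
      using Suc.prems(1) cquot_Suc_shift[of L] by (auto simp: t_def)
    then have "frac_part (J * inverse t) \<noteq> 0 \<and> fls_subdegree (frac_part (J * inverse t)) \<le> cf_d (inverse t) H"
      using Suc.IH[of "inverse t" J] \<open>J \<noteq> 0\<close> sdJ Suc.prems(4) dSuc
      by (simp add: J_def is_poly_lser_poly_part)
    then show ?thesis
      using frac_part_mult_via_inverse[OF Suc.prems(2) t] fKL dSuc by (fastforce simp: J_def)
  qed
qed

lemma poly_lser_mult_digit_nonzero:
  assumes "\<forall>i<H. frac_part (cquot L i) \<noteq> 0" "k \<noteq> 0" "int (Polynomial.degree k) < cf_d L H"
  shows "\<exists>n\<in>{1..nat (cf_d L H)}. (poly_lser k * L) $$ int n \<noteq> 0"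
proof -
  define n where "n = fls_subdegree (frac_part (poly_lser k * L))"
  have B: "frac_part (poly_lser k * L) \<noteq> 0" "n \<le> cf_d L H"
    using frac_part_mult_cf_bound[OF assms(1) is_poly_lser_poly_lser poly_lser_nonzero[OF assms(2)]]
      assms(3) fls_subdegree_poly_lser[OF assms(2)] by (simp_all add: n_def)
  have "1 \<le> n" using fls_subdegree_frac_part_ge_1[OF B(1)] by (simp add: n_def)
  moreover have "frac_part (poly_lser k * L) $$ n \<noteq> 0" using B(1) by (simp add: n_def)
  ultimately have "(poly_lser k * L) $$ int (nat n) \<noteq> 0" "nat n \<in> {1..nat (cf_d L H)}"
    using B(2) by (auto simp: fls_nth_frac_part)
  then show ?thesis by blast
qed

section \<open>Polynomials of bounded degree\<close>

definition polys_below :: "nat \<Rightarrow> 'a::zero poly set" where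
  "polys_below n = {k. \<forall>j\<ge>n. Polynomial.coeff k j = 0}"

lemma bij_betw_polys_below_coeffs:
  "bij_betw (\<lambda>k. restrict (Polynomial.coeff k) {..<n}) (polys_below n) ({..<n} \<rightarrow>\<^sub>E UNIV)"
proof (rule bij_betwI')
  fix x y :: "'a poly"
  assume "x \<in> polys_below n" "y \<in> polys_below n"
  then have "Polynomial.coeff x j = Polynomial.coeff y j"
    if "restrict (Polynomial.coeff x) {..<n} = restrict (Polynomial.coeff y) {..<n}" for j
    using fun_cong[OF that, of j] by (cases "j < n") (auto simp: polys_below_def)
  then show "(restrict (Polynomial.coeff x) {..<n} = restrict (Polynomial.coeff y) {..<n}) = (x = y)"
    by (auto simp: poly_eq_iff)
next
  fix f :: "nat \<Rightarrow> 'a"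
  assume f: "f \<in> {..<n} \<rightarrow>\<^sub>E UNIV"
  define k where "k = Poly (map f [0..<n])"
  have ck: "Polynomial.coeff k j = (if j < n then f j else 0)" for j
    by (simp add: k_def nth_default_def)
  have "f j = restrict (Polynomial.coeff k) {..<n} j" for j
    using f by (cases "j < n") (simp_all add: ck PiE_arb[of f "{..<n}"])
  then have "f = restrict (Polynomial.coeff k) {..<n}" ..
  moreover have "k \<in> polys_below n" by (simp add: polys_below_def ck)
  ultimately show "\<exists>k\<in>polys_below n. f = restrict (Polynomial.coeff k) {..<n}" by blast
qed simp

lemma finite_polys_below: "finite (polys_below n :: 'a::{finite,zero} poly set)"
proof -
  have "finite ({..<n} \<rightarrow>\<^sub>E (UNIV :: 'a set))" by (simp add: finite_PiE)
  then show ?thesis using bij_betw_finite[OF bij_betw_polys_below_coeffs[of n, where 'a='a]] by simp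
qed

lemma card_polys_below: "card (polys_below n :: 'a::{finite,zero} poly set) = CARD('a) ^ n"
  using bij_betw_same_card[OF bij_betw_polys_below_coeffs[of n, where 'a='a]] by (simp add: card_PiE)

lemma polys_below_add: "a \<in> polys_below n \<Longrightarrow> b \<in> polys_below n \<Longrightarrow> a + b \<in> polys_below n"
  by (simp add: polys_below_def)

lemma polys_below_diff:
  "a \<in> polys_below n \<Longrightarrow> b \<in> polys_below n \<Longrightarrow> (a - b :: 'a::ab_group_add poly) \<in> polys_below n"
  by (simp add: polys_below_def)

lemma degree_less_if_polys_below: "k \<in> polys_below r \<Longrightarrow> k \<noteq> 0 \<Longrightarrow> Polynomial.degree k < r"
  unfolding polys_below_def by (metis (mono_tags) leading_coeff_0_iff mem_Collect_eq not_le)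

lemma polys_below_mono: "r \<le> m \<Longrightarrow> polys_below r \<subseteq> polys_below m"
  by (auto simp: polys_below_def)

definition poly_trunc :: "nat \<Rightarrow> 'a::zero poly \<Rightarrow> 'a poly" where
  "poly_trunc r k = Poly (map (Polynomial.coeff k) [0..<r])"

lemma coeff_poly_trunc: "Polynomial.coeff (poly_trunc r k) j = (if j < r then Polynomial.coeff k j else 0)"
  by (simp add: poly_trunc_def nth_default_def)

lemma poly_trunc_in_polys_below: "poly_trunc r k \<in> polys_below r"
  by (simp add: polys_below_def coeff_poly_trunc)

text \<open>\<open>G\<close> is injective on each coset of \<open>polys_below r\<close>, hence maps it onto \<open>P\<close>; so every fiber
  meets every coset exactly once and is in bijection with the set of high-order parts.\<close>

context
  fixes G :: "'a::{finite,comm_ring_1} poly \<Rightarrow> 'b" and P :: "'b set" and r m :: nat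
  assumes finite_P: "finite P" and card_P: "card P = card (polys_below r :: 'a poly set)"
    and G_into_P: "G ` polys_below m \<subseteq> P" and r_le_m: "r \<le> m"
    and G_separates: "\<And>k1 k2. k1 - k2 \<in> polys_below r \<Longrightarrow> G k1 = G k2 \<Longrightarrow> k1 = k2"
begin

lemma image_translate_polys_below_eq:
  assumes h: "h \<in> polys_below m"
  shows "(\<lambda>l. G (l + h)) ` polys_below r = P"
proof (rule card_subset_eq[OF finite_P])
  have "l + h \<in> polys_below m" if "l \<in> polys_below r" for l
    using polys_below_add polys_below_mono[OF r_le_m] that h by blast
  then show "(\<lambda>l. G (l + h)) ` polys_below r \<subseteq> P"
    using G_into_P by blast
  have "inj_on (\<lambda>l. G (l + h)) (polys_below r)"
  proof (rule inj_onI)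
    fix l1 l2
    assume l: "l1 \<in> polys_below r" "l2 \<in> polys_below r" "G (l1 + h) = G (l2 + h)"
    then have "(l1 + h) - (l2 + h) \<in> polys_below r" by (simp add: polys_below_diff)
    then have "l1 + h = l2 + h" using l(3) by (rule G_separates)
    then show "l1 = l2" by simp
  qed
  then show "card ((\<lambda>l. G (l + h)) ` polys_below r) = card P"
    using card_image card_P by metis
qed

lemma card_fibers_eq:
  obtains N where "N > 0" "\<And>y. y \<in> P \<Longrightarrow> card {k \<in> polys_below m. G k = y} = N"
proof -
  define high where "high k = k - poly_trunc r k" for k :: "'a poly"
  have coeff_high: "Polynomial.coeff (high k) j = (if j < r then 0 else Polynomial.coeff k j)" for k j
    by (simp add: high_def coeff_poly_trunc)
  have high_in: "high k \<in> polys_below m" if "k \<in> polys_below m" for k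
    using that polys_below_mono[OF r_le_m] poly_trunc_in_polys_below
    unfolding high_def by (blast intro: polys_below_diff)
  have bij: "bij_betw high {k \<in> polys_below m. G k = y} (high ` polys_below m)" if y: "y \<in> P" for y
  proof (rule bij_betwI')
    fix k1 k2
    assume k: "k1 \<in> {k \<in> polys_below m. G k = y}" "k2 \<in> {k \<in> polys_below m. G k = y}"
    have "high k1 = high k2 \<Longrightarrow> k1 - k2 = poly_trunc r k1 - poly_trunc r k2"
      by (simp add: high_def algebra_simps)
    then have "high k1 = high k2 \<Longrightarrow> k1 - k2 \<in> polys_below r"
      using poly_trunc_in_polys_below polys_below_diff by metis
    then show "(high k1 = high k2) = (k1 = k2)"
      using G_separates[of k1 k2] k by auto
  next
    fix h
    assume "h \<in> high ` polys_below m"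
    then obtain k where k: "k \<in> polys_below m" "h = high k" by blast
    have "y \<in> (\<lambda>l. G (l + h)) ` polys_below r"
      using image_translate_polys_below_eq[OF high_in[OF k(1)]] y k(2) by simp
    then obtain l where l: "l \<in> polys_below r" "G (l + h) = y" by blast
    have "l + h \<in> polys_below m"
      using polys_below_add polys_below_mono[OF r_le_m] l(1) high_in[OF k(1)] k(2) by blast
    moreover have "high (l + h) = h"
      using l(1) by (simp add: poly_eq_iff coeff_high k(2) polys_below_def)
    ultimately show "\<exists>k\<in>{k \<in> polys_below m. G k = y}. h = high k"
      using l(2) by (intro bexI[of _ "l + h"]) auto
  qed auto
  show ?thesis
  proof (rule that)
    show "card (high ` polys_below m) > 0"
      using finite_polys_below[of m] by (auto simp: card_gt_0_iff polys_below_def intro: exI[of _ 0])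
    show "card {k \<in> polys_below m. G k = y} = card (high ` polys_below m)" if "y \<in> P" for y
      using bij_betw_same_card[OF bij[OF that]] .
  qed
qed

end

section \<open>Base-\<open>p\<close> digits\<close>

fun base_num :: "nat \<Rightarrow> (nat \<Rightarrow> nat) \<Rightarrow> nat \<Rightarrow> nat" where
  "base_num b d 0 = 0"
| "base_num b d (Suc r) = b * base_num b d r + d r"

lemma base_num_less: "(\<And>i. i < r \<Longrightarrow> d i < b) \<Longrightarrow> base_num b d r < b ^ r"
proof (induction r)
  case (Suc r)
  have "d r + 1 \<le> b" using Suc.prems[of r] by simp
  moreover have "base_num b d r + 1 \<le> b ^ r" using Suc by simp
  ultimately have "b * base_num b d r + d r + 1 \<le> b * (base_num b d r + 1)" by (simp add: algebra_simps)
  also have "\<dots> \<le> b * b ^ r" by (rule mult_le_mono2) fact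
  finally show ?case by simp
qed simp

lemma base_num_inj:
  "(\<And>i. i < r \<Longrightarrow> d i < b \<and> e i < b) \<Longrightarrow> base_num b d r = base_num b e r \<Longrightarrow> i < r \<Longrightarrow> d i = e i"
proof (induction r)
  case (Suc r)
  have "d r < b" "e r < b" using Suc.prems by auto
  moreover have "(b * base_num b d r + d r) mod b = (b * base_num b e r + e r) mod b"
    using Suc.prems by simp
  ultimately have "d r = e r" by simp
  moreover from this have "base_num b d r = base_num b e r"
    using Suc.prems \<open>d r < b\<close> by simp
  ultimately show ?case using Suc by (cases "i = r") auto
qed simp

lemma base_num_real:
  "b > 0 \<Longrightarrow> (\<Sum>i<r. real (d i) / real b ^ Suc i) = real (base_num b d r) / real b ^ r"
  by (induction r) (simp_all add: field_simps)

lemma digit_series_bounds: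
  fixes x :: "nat \<Rightarrow> real" and b :: real
  assumes b: "b > 1" and x: "\<And>i. 0 \<le> x i" "\<And>i. x i \<le> b - 1"
  shows "(\<Sum>i<r. x i / b ^ Suc i) \<le> (\<Sum>i. x i / b ^ Suc i)"
    and "(\<Sum>i. x i / b ^ Suc i) \<le> (\<Sum>i<r. x i / b ^ Suc i) + 1 / b ^ r"
proof -
  define g where "g i = (b - 1) / b ^ Suc i" for i
  have "(\<lambda>i. (1 / b) ^ i) sums (1 / (1 - 1 / b))"
    by (rule geometric_sums) (use b in simp)
  then have "(\<lambda>i. (b - 1) / b * (1 / b) ^ i) sums ((b - 1) / b * (1 / (1 - 1 / b)))"
    by (rule sums_mult)
  moreover have "(b - 1) / b * (1 / (1 - 1 / b)) = 1" using b by (simp add: field_simps)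
  moreover have "(\<lambda>i. (b - 1) / b * (1 / b) ^ i) = g"
    by (auto simp: g_def fun_eq_iff power_one_over field_simps)
  ultimately have g_sums: "g sums 1" by metis
  have le: "x i / b ^ Suc i \<le> g i" and nn: "0 \<le> x i / b ^ Suc i" for i
    unfolding g_def using x b by (simp_all add: divide_right_mono)
  have sm: "summable (\<lambda>i. x i / b ^ Suc i)"
  proof (rule summable_comparison_test'[of g 0])
    show "summable g" using g_sums sums_summable by blast
    show "norm (x n / b ^ Suc n) \<le> g n" for n
      using le[of n] nn[of n] by (simp only: real_norm_def abs_of_nonneg)
  qed
  have split: "(\<Sum>i. x i / b ^ Suc i) = (\<Sum>i. x (i + r) / b ^ Suc (i + r)) + (\<Sum>i<r. x i / b ^ Suc i)"
    using suminf_split_initial_segment[OF sm, of r] by simp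
  have sm_tail: "summable (\<lambda>i. x (i + r) / b ^ Suc (i + r))"
    using sm summable_iff_shift[of "\<lambda>i. x i / b ^ Suc i" r] by simp
  have "0 \<le> (\<Sum>i. x (i + r) / b ^ Suc (i + r))" by (rule suminf_nonneg[OF sm_tail]) (use nn in auto)
  then show "(\<Sum>i<r. x i / b ^ Suc i) \<le> (\<Sum>i. x i / b ^ Suc i)" using split by simp
  have "(\<lambda>i. g (i + r)) = (\<lambda>i. 1 / b ^ r * g i)"
    by (auto simp: g_def fun_eq_iff power_add field_simps)
  then have g_tail: "(\<lambda>i. g (i + r)) sums (1 / b ^ r)"
    using sums_mult[OF g_sums, of "1 / b ^ r"] by simp
  have "(\<Sum>i. x (i + r) / b ^ Suc (i + r)) \<le> (\<Sum>i. g (i + r))"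
    by (rule suminf_le) (use le sm_tail g_tail g_sums sums_summable in auto)
  then show "(\<Sum>i. x i / b ^ Suc i) \<le> (\<Sum>i<r. x i / b ^ Suc i) + 1 / b ^ r"
    using split sums_unique[OF g_tail] by simp
qed

lemma to_int_mod_ring_range: "0 \<le> to_int_mod_ring (x :: 'a::finite mod_ring) \<and> to_int_mod_ring x < int CARD('a)"
  using range_to_int_mod_ring[where 'a='a] by (metis atLeastLessThan_iff rangeI)

definition lser_digit :: "'p::prime_card lser \<Rightarrow> nat \<Rightarrow> nat" where
  "lser_digit M i = nat (to_int_mod_ring (frac_part M $$ int (Suc i)))"

definition lser_code :: "nat \<Rightarrow> 'p::prime_card lser \<Rightarrow> nat" where
  "lser_code r M = base_num CARD('p) (lser_digit M) r"

lemma lser_digit_less: "lser_digit (M :: 'p::prime_card lser) i < CARD('p)"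
  using to_int_mod_ring_range[of "frac_part M $$ int (Suc i)"] by (simp add: lser_digit_def nat_less_iff)

lemma lser_code_less: "lser_code r (M :: 'p::prime_card lser) < CARD('p) ^ r"
  unfolding lser_code_def by (rule base_num_less) (rule lser_digit_less)

lemma lser_code_eq_nth:
  assumes "lser_code r M = lser_code r M'" "n \<in> {1..r}"
  shows "M $$ int n = M' $$ int n"
proof -
  obtain i where i: "n = Suc i" "i < r" using assms(2) by (cases n) auto
  then have "lser_digit M i = lser_digit M' i"
    using base_num_inj assms(1) lser_digit_less unfolding lser_code_def by blast
  then have "to_int_mod_ring (frac_part M $$ int n) = to_int_mod_ring (frac_part M' $$ int n)"
    using to_int_mod_ring_range[of "frac_part M $$ int n"] to_int_mod_ring_range[of "frac_part M' $$ int n"] i(1)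
    by (simp add: lser_digit_def eq_nat_nat_iff)
  then show ?thesis
    using assms(2) by (simp add: to_int_mod_ring_hom.injectivity fls_nth_frac_part)
qed

lemma eval_at_p_bounds:
  fixes M :: "'p::prime_card lser"
  defines "b \<equiv> real CARD('p)"
  shows "real (lser_code r M) / b ^ r \<le> eval_at_p M"
    and "eval_at_p M \<le> (real (lser_code r M) + 1) / b ^ r"
proof -
  define x where "x i = real (lser_digit M i)" for i
  have p: "CARD('p) > 1" using prime_card[where 'a='p] prime_gt_1_nat by blast
  then have b: "b > 1" by (simp add: b_def)
  have x: "0 \<le> x i" "x i \<le> b - 1" for i
    using lser_digit_less[of M i] by (auto simp: x_def b_def)
  have "real (nat (to_int_mod_ring c)) = real_of_int (to_int_mod_ring c)" for c :: "'p mod_ring"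
    using to_int_mod_ring_range[of c] by simp
  then have "eval_at_p M = (\<Sum>i. x i / b ^ Suc i)"
    unfolding eval_at_p_def x_def b_def lser_digit_def by simp
  moreover have "(\<Sum>i<r. x i / b ^ Suc i) = real (lser_code r M) / b ^ r"
    unfolding x_def b_def lser_code_def using p by (intro base_num_real) simp
  ultimately show "real (lser_code r M) / b ^ r \<le> eval_at_p M"
    and "eval_at_p M \<le> (real (lser_code r M) + 1) / b ^ r"
    using digit_series_bounds[where x=x and b=b and r=r, OF b x] by (simp_all add: add_divide_distrib)
qed

section \<open>Discrepancy of the Kronecker-type point set\<close>

context
  fixes I :: "'i set" and a :: "'i \<Rightarrow> nat" and R N :: nat and z :: "'i \<Rightarrow> real"
  assumes finite_I: "finite I" and R_pos: "R > 0"
    and a_less: "\<And>k. k \<in> I \<Longrightarrow> a k < R"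
    and card_fiber: "\<And>b. b < R \<Longrightarrow> card {k \<in> I. a k = b} = N"
    and z_in_cell: "\<And>k. k \<in> I \<Longrightarrow> real (a k) / real R \<le> z k \<and> z k \<le> (real (a k) + 1) / real R"
begin

lemma card_cells_below: "c \<le> R \<Longrightarrow> card {k \<in> I. a k < c} = c * N"
proof (induction c)
  case (Suc c)
  have "{k \<in> I. a k < Suc c} = {k \<in> I. a k < c} \<union> {k \<in> I. a k = c}" by auto
  moreover have "card ({k \<in> I. a k < c} \<union> {k \<in> I. a k = c}) = card {k \<in> I. a k < c} + card {k \<in> I. a k = c}"
    by (rule card_Un_disjoint) (use finite_I in auto)
  ultimately show ?case using Suc card_fiber[of c] by simp
qed simp

lemma card_points_below_bounds:
  assumes \<gamma>: "0 < \<gamma>" "\<gamma> \<le> 1"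
  shows "(\<gamma> * real R - 1) * real N \<le> real (card {k \<in> I. z k < \<gamma>})"
    and "real (card {k \<in> I. z k < \<gamma>}) \<le> (\<gamma> * real R + 1) * real N"
proof -
  define c where "c = nat \<lceil>\<gamma> * real R\<rceil>"
  have c: "real c - 1 < \<gamma> * real R" "\<gamma> * real R \<le> real c"
    unfolding c_def using \<gamma> R_pos by (auto simp: ceiling_correct)
  have "\<gamma> * real R \<le> real R" using \<gamma> by (simp add: mult_left_le_one_le)
  moreover have "0 < \<gamma> * real R" using \<gamma> R_pos by simp
  ultimately have "c \<le> R" "1 \<le> c" using c by linarith+
  have low: "{k \<in> I. a k < c - 1} \<subseteq> {k \<in> I. z k < \<gamma>}"
  proof safe
    fix k assume k: "k \<in> I" "a k < c - 1"
    then have "real (a k) + 1 < \<gamma> * real R" using c \<open>1 \<le> c\<close> by linarith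
    then have "(real (a k) + 1) / real R < \<gamma>" using R_pos by (simp add: divide_less_eq)
    then show "z k < \<gamma>" using z_in_cell[OF k(1)] by linarith
  qed
  then have "(c - 1) * N \<le> card {k \<in> I. z k < \<gamma>}"
    using card_mono[OF _ low] finite_I card_cells_below[of "c - 1"] \<open>c \<le> R\<close> by simp
  then have "real (c - 1) * real N \<le> real (card {k \<in> I. z k < \<gamma>})"
    by (metis of_nat_le_iff of_nat_mult)
  then show "(\<gamma> * real R - 1) * real N \<le> real (card {k \<in> I. z k < \<gamma>})"
    using c \<open>1 \<le> c\<close> by (smt (verit) of_nat_0_le_iff of_nat_diff mult_right_mono of_nat_1)
  have high: "{k \<in> I. z k < \<gamma>} \<subseteq> {k \<in> I. a k < c}"
  proof safe
    fix k assume k: "k \<in> I" "z k < \<gamma>"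
    then have "real (a k) / real R < \<gamma>" using z_in_cell[OF k(1)] by simp
    then show "a k < c" using c R_pos by (simp add: divide_less_eq)
  qed
  then have "card {k \<in> I. z k < \<gamma>} \<le> c * N"
    using card_mono[OF _ high] finite_I card_cells_below[of c] \<open>c \<le> R\<close> by simp
  then have "real (card {k \<in> I. z k < \<gamma>}) \<le> real c * real N"
    by (metis of_nat_le_iff of_nat_mult)
  then show "real (card {k \<in> I. z k < \<gamma>}) \<le> (\<gamma> * real R + 1) * real N"
    using c by (smt (verit) of_nat_0_le_iff mult_right_mono)
qed

lemma star_disc_le_cell_width:
  assumes "N > 0"
  shows "star_disc I z \<le> 1 / real R"
proof -
  have card_I: "card I = R * N"
    using card_cells_below[of R] a_less by (metis (no_types, lifting) Collect_cong order_refl Collect_mem_eq)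
  have "\<bar>real (card {k \<in> I. z k < \<gamma>}) / real (card I) - \<gamma>\<bar> \<le> 1 / real R"
    if "0 < \<gamma>" "\<gamma> \<le> 1" for \<gamma>
  proof -
    have RN: "real R * real N > 0" using R_pos assms by simp
    have "\<bar>real (card {k \<in> I. z k < \<gamma>}) - \<gamma> * (real R * real N)\<bar> \<le> real N"
      using card_points_below_bounds[OF that] by (simp add: algebra_simps abs_le_iff)
    then have "\<bar>real (card {k \<in> I. z k < \<gamma>}) - \<gamma> * (real R * real N)\<bar> / (real R * real N) \<le> 1 / real R"
      using RN R_pos by (simp add: divide_le_eq)
    moreover have "real (card {k \<in> I. z k < \<gamma>}) / (real R * real N) - \<gamma>
        = (real (card {k \<in> I. z k < \<gamma>}) - \<gamma> * (real R * real N)) / (real R * real N)"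
      using R_pos assms by (simp add: diff_divide_distrib)
    ultimately show ?thesis
      using RN by (simp add: card_I abs_divide)
  qed
  then show ?thesis
    unfolding star_disc_def by (intro cSup_least) (auto intro: exI[of _ 1])
qed

end

lemma star_disc_polys_below_le:
  fixes L V :: "'p::prime_card lser"
  assumes nonterminating: "\<forall>i<H. frac_part (cquot L i) \<noteq> 0" and "cf_d L H \<le> int m"
  shows "star_disc (polys_below m) (\<lambda>k. eval_at_p (poly_lser k * L + V))
           \<le> 1 / real (CARD('p) ^ nat (cf_d L H))"
proof -
  define r where "r = nat (cf_d L H)"
  define G where "G k = lser_code r (poly_lser k * L + V)" for k
  have "r \<le> m" using assms(2) by (simp add: r_def)
  have G_separates: "k1 = k2" if "k1 - k2 \<in> polys_below r" "G k1 = G k2" for k1 k2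
  proof (rule ccontr)
    assume "k1 \<noteq> k2"
    then have "int (Polynomial.degree (k1 - k2)) < cf_d L H"
      using degree_less_if_polys_below[OF that(1)] cf_d_nonneg[of L H] by (simp add: r_def)
    then have "\<exists>n\<in>{1..r}. (poly_lser (k1 - k2) * L) $$ int n \<noteq> 0"
      using poly_lser_mult_digit_nonzero[OF nonterminating] \<open>k1 \<noteq> k2\<close> by (simp add: r_def)
    then obtain n where n: "n \<in> {1..r}" "(poly_lser (k1 - k2) * L) $$ int n \<noteq> 0" ..
    have "(poly_lser k1 * L + V) $$ int n = (poly_lser k2 * L + V) $$ int n"
      using lser_code_eq_nth[OF that(2)[unfolded G_def] n(1)] .
    with n(2) show False by (simp add: poly_lser_diff left_diff_distrib)
  qed
  obtain N where N: "N > 0" "\<And>b. b \<in> {..<CARD('p) ^ r} \<Longrightarrow> card {k \<in> polys_below m. G k = b} = N"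
  proof (rule card_fibers_eq[of "{..<CARD('p) ^ r}" r G m])
    show "G ` polys_below m \<subseteq> {..<CARD('p) ^ r}" using lser_code_less by (auto simp: G_def)
  qed (use G_separates \<open>r \<le> m\<close> in \<open>simp_all add: card_polys_below\<close>)
  have "star_disc (polys_below m) (\<lambda>k. eval_at_p (poly_lser k * L + V)) \<le> 1 / real (CARD('p) ^ r)"
    by (rule star_disc_le_cell_width[where a = G and N = N])
      (use N finite_polys_below lser_code_less eval_at_p_bounds in \<open>auto simp: G_def\<close>)
  then show ?thesis by (simp add: r_def)
qed

theorem lemma5:
  fixes L V :: "'p::prime_card lser" and m H :: nat
  assumes "irrational_lser L"
    and "cf_d L H \<le> int m" and "int m < cf_d L (Suc H)"
  shows "real CARD('p) ^ m *
           star_disc {k :: 'p mod_ring poly. \<forall>j\<ge>m. Polynomial.coeff k j = 0}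
                     (\<lambda>k. eval_at_p (poly_lser k * L + V))
         \<le> real CARD('p) powr real_of_int (ldeg (pquot L (Suc H)))"
proof -
  define p where "p = real CARD('p)"
  define r where "r = nat (cf_d L H)"
  have "p > 1" using prime_card[where 'a='p] prime_gt_1_nat by (simp add: p_def)
  have "cf_d L (Suc H) = cf_d L H + ldeg (pquot L (Suc H))"
    by (simp add: cf_d_def)
  then have deg_A: "int (m - r) < ldeg (pquot L (Suc H))" "r \<le> m"
    using assms(2,3) cf_d_nonneg[of L H] by (simp_all add: r_def)
  then have "pquot L (Suc H) \<noteq> 0" by (auto simp: ldeg_def)
  then have "\<forall>i<H. frac_part (cquot L i) \<noteq> 0"
    using frac_part_cquot_nonzero[of L H] by simp
  then have "star_disc (polys_below m) (\<lambda>k. eval_at_p (poly_lser k * L + V)) \<le> 1 / p ^ r"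
    using star_disc_polys_below_le[OF _ assms(2)] by (simp add: p_def r_def)
  then have "p ^ m * star_disc (polys_below m) (\<lambda>k. eval_at_p (poly_lser k * L + V)) \<le> p ^ (m - r)"
    using \<open>p > 1\<close> \<open>r \<le> m\<close> by (simp add: power_diff divide_simps mult_left_mono)
  also have "\<dots> \<le> p powr real_of_int (ldeg (pquot L (Suc H)))"
    using \<open>p > 1\<close> deg_A(1) by (simp add: powr_realpow[symmetric])
  finally show ?thesis by (simp add: p_def polys_below_def)
qed

end
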